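(* Let $1\le i,j\le d$ with $i\ne j$ and $m,n\in\mathbb Z_{<0}$. Then the vertex operator of $v^{ij}(m,n)\mathbf 1\in V_{\mathcal J}=M_r$ is $$Y(v^{ij}(m,n)\mathbf 1,z)=(-1)^{-m-n}\sum_{l\in\mathbb Z}\Big\{\sum_{k\in\mathbb Z}\binom{l+n-k}{-m-1}\binom{k-n-1}{-n-1}v^{ij}(l+m+n+1-k,k)\Big\}z^{-l-1}.$$
   Context: Fix an integer $d\ge 2$ and $r\in\mathbb{C}$. Let $\hat{\mathfrak h}$ be the complex Lie algebra with basis $\{v^i(m)\mid 1\le i\le d,\ m\in\mathbb{Z}\}\cup\{\mathbf c\}$ and bracket $[v^i(m),v^j(n)]=\delta_{m+n,0}\delta_{i,j}\,m\,\mathbf c$, $[\mathbf c,\hat{\mathfrak h}]=0$. In $A=U(\hat{\mathfrak h})/\langle \mathbf c-1\rangle$ let $v^{ij}(m,n)$ be the image of $v^i(m)v^j(n)$; then $v^{ij}(m,n)=v^{ji}(n,m)$ unless $i=j$ and $m=-n$, and $v^{ii}(m,-m)=v^{ii}(-m,m)+m$. Let $\mathcal B=\{v^{ii}(m,n)\mid 1\le i\le d,\ m\le n\}\cup\{v^{ij}(m,n)\mid 1\le i<j\le d,\ m,n\in\mathbb Z\}$; then $\mathcal B\cup\{1\}$ is linearly independent, $\mathcal L:=\mathrm{span}_{\mathbb C}\mathcal B\oplus\mathbb C\subset A$ contains every $v^{ij}(m,n)$ and is closed under $[x,y]=xy-yx$. With $\pi_1,\pi_2$ the projections of $\mathcal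 L$ onto $\mathrm{span}\,\mathcal B$ and onto $\mathbb C$, $[x,y]_r=\pi_1([x,y])+r\pi_2([x,y])$ is a Lie bracket on $\mathcal L$; call this Lie algebra $\mathcal L_r$. Let $\mathcal B_+=\{v^{ij}(m,n)\in\mathcal B\mid m\ge 0\text{ or }n\ge 0\}$, $\mathcal B_-=\{v^{ij}(m,n)\in\mathcal B\mid m,n<0\}$, $\mathcal L_r^+=\mathrm{span}\,\mathcal B_+\oplus\mathbb C$, and $M_r=U(\mathcal L_r)\otimes_{U(\mathcal L_r^+)}\mathbb C\mathbf 1$, where $\mathcal B_+$ acts by $0$ on $\mathbf 1$ and $s\in\mathbb C\subset\mathcal L_r$ acts by the scalar $s$; $M_r$ is graded by giving $x_p\cdots x_1\mathbf 1$ with $x_q=v^{i_qj_q}(m_q,n_q)\in\mathcal B_-$ degree $-\sum_q(m_q+n_q)$. Define operators on $M_r$: $L_r^{ij}(m)=\frac12\sum_{h\in\mathbb Z}v^{ij}(m-h,h)$ if $i\ne j$ or $m\ne0$, and $L_r^{ii}(0)=\frac12 v^{ii}(0,0)+\sum_{h>0}v^{ii}(-h,h)$. Let $\omega_r^{ij}=L_r^{ij}(-2)\mathbf 1$, $\omega=\sum_i\omega_r^{ii}$, and $V_{\mathcal J}\subset M_r$ the span of all $L_r^{i_1j_1}(m_1)\cdots L_r^{i_pj_p}(m_p)\mathbf 1$; it is known that $V_{\mathcal J}=M_r$. By a theorem of Ashihara–Miyamoto, there is a unique linear map $Y(\cdot,z):V_{\mathcal J}\to\mathrm{End}(V_{\mathcal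 J})[[z,z^{-1}]]$ with $Y(\omega_r^{ij},z)=\sum_m L_r^{ij}(m)z^{-m-2}$ and $Y(\mathbf 1,z)=\mathrm{Id}$ making $(V_{\mathcal J},Y,\mathbf 1,\omega)$ a vertex operator algebra of central charge $dr$. Binomial coefficients are $\binom{a}{b}=a(a-1)\cdots(a-b+1)/b!$ for $a\in\mathbb Z$, $b\in\mathbb Z_{\ge0}$. The inner sums act on $M_r$ as operators (only finitely many terms are nonzero on each vector). *)

theory Defs
  imports Complex_Main "HOL-Library.Multiset" "HOL-Library.Product_Lexorder"
    "HOL-Library.Groups_Big_Fun"
begin

(* A generator (i,j,m,n) stands for v^{ij}(m,n). *)
type_synonym gen = "nat \<times> nat \<times> int \<times> int"

definition in_range :: "nat \<Rightarrow> gen \<Rightarrow> bool" where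
  "in_range d g = (case g of (i,j,m,n) \<Rightarrow> 1 \<le> i \<and> i \<le> d \<and> 1 \<le> j \<and> j \<le> d)"

definition inB :: "nat \<Rightarrow> gen \<Rightarrow> bool" where
  "inB d g = (in_range d g \<and> (case g of (i,j,m,n) \<Rightarrow> i < j \<or> (i = j \<and> m \<le> n)))"

definition inBminus :: "nat \<Rightarrow> gen \<Rightarrow> bool" where
  "inBminus d g = (inB d g \<and> (case g of (i,j,m,n) \<Rightarrow> m < 0 \<and> n < 0))"

definition inBplus :: "nat \<Rightarrow> gen \<Rightarrow> bool" where
  "inBplus d g = (inB d g \<and> (case g of (i,j,m,n) \<Rightarrow> m \<ge> 0 \<or> n \<ge> 0))"

(* pi_2 (constant part) of the element v^{ij}(m,n) of L written in the basis B + C *)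
definition cst :: "gen \<Rightarrow> complex" where
  "cst g = (case g of (i,j,m,n) \<Rightarrow> if i = j \<and> n < m \<and> m = - n then of_int m else 0)"

(* [v^{ij}(m,n), v^{kl}(p,q)] computed in A, as a list of (coefficient, v^{ab}(s,t)) *)
definition brk_terms :: "gen \<Rightarrow> gen \<Rightarrow> (complex \<times> gen) list" where
  "brk_terms x y = (case x of (i,j,m,n) \<Rightarrow> case y of (k,l,p,q) \<Rightarrow>
     [ (if j = k \<and> n + p = 0 then of_int n else 0, (i,l,m,q)),
       (if j = l \<and> n + q = 0 then of_int n else 0, (i,k,m,p)),
       (if i = k \<and> m + p = 0 then of_int m else 0, (l,j,q,n)),
       (if i = l \<and> m + q = 0 then of_int m else 0, (k,j,p,n)) ])"

(* PBW monomial x_p ... x_1 1 attached to a multiset of generators *)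
definition pbw_mono :: "(gen \<Rightarrow> 'v \<Rightarrow> 'v) \<Rightarrow> 'v \<Rightarrow> gen multiset \<Rightarrow> 'v" where
  "pbw_mono act one S = foldr act (sorted_list_of_multiset S) one"

(* (V, sc, act, one) is (isomorphic to) the induced module M_r:
   act g is the action of v^{ij}(m,n) (for every tuple, B-element or not),
   the constants s of L_r act by the scalar s, the bracket is [ , ]_r,
   B_+ kills one, and the PBW monomials in B_- form a basis. *)
definition Mr_module ::
  "nat \<Rightarrow> complex \<Rightarrow> (complex \<Rightarrow> 'v::ab_group_add \<Rightarrow> 'v) \<Rightarrow> (gen \<Rightarrow> 'v \<Rightarrow> 'v) \<Rightarrow> 'v \<Rightarrow> bool" where
  "Mr_module d r sc act one =
    (vector_space sc \<and>
     (\<forall>g. in_range d g \<longrightarrow> Vector_Spaces.linear sc sc (act g)) \<and>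
     (\<forall>i j m n. in_range d (i,j,m,n) \<and> \<not> (i = j \<and> m = - n) \<longrightarrow> act (i,j,m,n) = act (j,i,n,m)) \<and>
     (\<forall>i m v. 1 \<le> i \<and> i \<le> d \<longrightarrow> act (i,i,m,-m) v = act (i,i,-m,m) v + sc (of_int m) v) \<and>
     (\<forall>x y v. in_range d x \<and> in_range d y \<longrightarrow>
        act x (act y v) - act y (act x v) =
          (\<Sum>(c,g)\<leftarrow>brk_terms x y. sc c (act g v))
          + sc ((r - 1) * (\<Sum>(c,g)\<leftarrow>brk_terms x y. c * cst g)) v) \<and>
     (\<forall>x. inBplus d x \<longrightarrow> act x one = 0) \<and>
     (let M = {S. \<forall>g\<in>set_mset S. inBminus d g} in
        inj_on (pbw_mono act one) M \<and>
        \<not> module.dependent sc (pbw_mono act one ` M) \<and>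
        module.span sc (pbw_mono act one ` M) = UNIV))"

(* the operators L_r^{ij}(m); inner sums are finite sums of the nonzero terms *)
definition Lop :: "(complex \<Rightarrow> 'v::ab_group_add \<Rightarrow> 'v) \<Rightarrow> (gen \<Rightarrow> 'v \<Rightarrow> 'v)
    \<Rightarrow> nat \<Rightarrow> nat \<Rightarrow> int \<Rightarrow> 'v \<Rightarrow> 'v" where
  "Lop sc act i j m v =
    (if i \<noteq> j \<or> m \<noteq> 0 then sc (1/2) (Sum_any (\<lambda>h. act (i,j,m-h,h) v))
     else sc (1/2) (act (i,i,0,0) v) + Sum_any (\<lambda>h. if h > 0 then act (i,i,-h,h) v else 0))"

(* Vertex operator algebra (FLM); Y a n b = a_(n) b, i.e. Y(a,z) = sum_n a_(n) z^{-n-1} *)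
definition is_VOA ::
  "(complex \<Rightarrow> 'v::ab_group_add \<Rightarrow> 'v) \<Rightarrow> ('v \<Rightarrow> int \<Rightarrow> 'v \<Rightarrow> 'v) \<Rightarrow> 'v \<Rightarrow> 'v \<Rightarrow> complex \<Rightarrow> bool" where
  "is_VOA sc Y one omega c =
    (vector_space sc \<and>
     (\<forall>a n. Vector_Spaces.linear sc sc (Y a n)) \<and>
     (\<forall>n b. Vector_Spaces.linear sc sc (\<lambda>a. Y a n b)) \<and>
     (\<forall>a b. \<exists>N. \<forall>n\<ge>N. Y a n b = 0) \<and>
     (\<forall>n b. Y one n b = (if n = -1 then b else 0)) \<and>
     (\<forall>a n. n \<ge> 0 \<longrightarrow> Y a n one = 0) \<and>
     (\<forall>a. Y a (-1) one = a) \<and>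
     (\<forall>a b e p q s.
        Sum_any (\<lambda>i::nat. sc ((of_int p :: complex) gchoose i) (Y (Y a (s + int i) b) (p + q - int i) e))
        = Sum_any (\<lambda>i::nat. sc ((-1) ^ i * ((of_int s :: complex) gchoose i))
             (Y a (p + s - int i) (Y b (q + int i) e)
              - sc ((-1) powi s) (Y b (q + s - int i) (Y a (p + int i) e))))) \<and>
     (\<forall>m n v. Y omega (m + 1) (Y omega (n + 1) v) - Y omega (n + 1) (Y omega (m + 1) v)
        = sc (of_int (m - n)) (Y omega (m + n + 1) v)
          + (if m + n = 0 then sc (of_int (m^3 - m) / 12 * c) v else 0)) \<and>
     (\<forall>a n b. Y (Y omega 0 a) n b = sc (- of_int n) (Y a (n - 1) b)) \<and>
     (let Vn = (\<lambda>n::int. {v. Y omega 1 v = sc (of_int n) v}) in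
        module.span sc (\<Union>n. Vn n) = UNIV \<and>
        (\<forall>n. \<exists>F. finite F \<and> Vn n \<subseteq> module.span sc F) \<and>
        (\<exists>N. \<forall>n<N. Vn n = {0})))"

end

theory Submission
  imports Defs
begin

text \<open>
  The base case is v^ij(-1,-1) 1 = 2 w^ij, whose vertex operator is the given series of the
  L^ij(p). The first index is then lowered by L = L^ii(-1): since L 1 = 0 and
  [L, v^ij(p,q)] = -p v^ij(p-1,q), we get v^ij(m-1,n) 1 = -(1/m) L v^ij(m,n) 1; and as L is the
  0-th mode of w^ii, the Borcherds identity gives Y(L a, z) = [L, Y(a, z)], which is computed term
  by term with the same commutator, the coefficients obeying the absorption identity of binomial
  coefficients. The second index follows from the symmetry v^ij(m,n) = v^ji(n,m), under which the
  formula is invariant after k |-> l+m+n+1-k. All sums involved are finite because every vector of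
  M_r, being a combination of PBW monomials, is killed by the v^ab(s,t) with s or t large.
\<close>

lemma Sum_any_diff:
  fixes g h :: "'a \<Rightarrow> 'b::ab_group_add"
  assumes "finite {a. g a \<noteq> 0}" and "finite {a. h a \<noteq> 0}"
  shows "Sum_any (\<lambda>a. g a - h a) = Sum_any g - Sum_any h"
proof -
  let ?S = "{a. g a \<noteq> 0} \<union> {a. h a \<noteq> 0}"
  have "Sum_any (\<lambda>a. g a - h a) = (\<Sum>a\<in>?S. g a - h a)"
    by (rule Sum_any.expand_superset) (use assms in auto)
  also have "\<dots> = Sum_any g - Sum_any h"
    using assms by (simp add: sum_subtractf Sum_any.expand_superset[of ?S])
  finally show ?thesis .
qed

lemma Sum_any_module_hom:
  assumes "module_hom s1 s2 f" and "finite {a. g a \<noteq> 0}"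
  shows "f (Sum_any g) = Sum_any (\<lambda>a. f (g a))"
proof -
  have "f (Sum_any g) = (\<Sum>a\<in>{a. g a \<noteq> 0}. f (g a))"
    by (simp add: Sum_any.expand_set module_hom.sum[OF assms(1)])
  also have "\<dots> = Sum_any (\<lambda>a. f (g a))"
    using assms by (intro Sum_any.expand_superset[symmetric]) (auto simp: module_hom.zero)
  finally show ?thesis .
qed

lemma gbinomial_Suc_absorb:
  "(a - of_nat k) * (a gchoose k) = of_nat (Suc k) * (a gchoose Suc k)"
  unfolding gbinomial_absorb_comp gbinomial_absorption ..

definition vo_coeff :: "int \<Rightarrow> int \<Rightarrow> int \<Rightarrow> int \<Rightarrow> complex" where
  "vo_coeff m n l k =
     (of_int (l + n - k) gchoose nat (- m - 1)) * (of_int (k - n - 1) gchoose nat (- n - 1))"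

lemma vo_coeff_minus_one [simp]: "vo_coeff (-1) (-1) l k = 1"
  by (simp add: vo_coeff_def)

lemma vo_coeff_swap: "vo_coeff n m l (l + m + n + 1 - k) = vo_coeff m n l k"
proof -
  have "l + m - (l + m + n + 1 - k) = k - n - 1" "l + m + n + 1 - k - m - 1 = l + n - k"
    by simp_all
  then show ?thesis unfolding vo_coeff_def by (simp only: mult.commute)
qed

lemma vo_coeff_pred_first:
  assumes "m < 0"
  shows "of_int m * vo_coeff (m - 1) n l k = - (of_int (l + m + n + 1 - k) * vo_coeff m n l k)"
proof -
  define a where "a = nat (- m - 1)"
  define X :: complex where "X = of_int (l + n - k)"
  have a: "nat (- (m - 1) - 1) = Suc a" "of_nat a = - of_int m - (1::complex)"
    using assms by (simp_all add: a_def of_nat_nat)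
  have "of_int (l + m + n + 1 - k) * (X gchoose a) = (X - of_nat a) * (X gchoose a)"
    unfolding X_def a by simp
  also have "\<dots> = of_nat (Suc a) * (X gchoose Suc a)"
    by (rule gbinomial_Suc_absorb)
  also have "\<dots> = - of_int m * (X gchoose Suc a)"
    using a(2) by simp
  finally have "of_int m * (X gchoose Suc a) = - (of_int (l + m + n + 1 - k) * (X gchoose a))"
    by simp
  then show ?thesis
    unfolding vo_coeff_def a(1) X_def[symmetric] a_def[symmetric]
    by (metis minus_mult_left mult.assoc)
qed

lemma in_range_iff [simp]: "in_range d (i, j, a, b) \<longleftrightarrow> i \<in> {1..d} \<and> j \<in> {1..d}"
  by (auto simp: in_range_def)

locale Mr =
  fixes d :: nat and r :: complex
    and sc :: "complex \<Rightarrow> 'v::ab_group_add \<Rightarrow> 'v"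
    and act :: "gen \<Rightarrow> 'v \<Rightarrow> 'v" and one :: 'v
  assumes Mr_module: "Mr_module d r sc act one"
begin

sublocale V: vector_space sc
  using Mr_module unfolding Mr_module_def by auto

lemma act_hom: "in_range d g \<Longrightarrow> module_hom sc sc (act g)"
  using Mr_module unfolding Mr_module_def linear_iff_module_hom by blast

lemma act_swap:
  "i \<in> {1..d} \<Longrightarrow> j \<in> {1..d} \<Longrightarrow> \<not> (i = j \<and> a = - b) \<Longrightarrow>
     act (i, j, a, b) = act (j, i, b, a)"
  using Mr_module unfolding Mr_module_def by (auto simp del: in_range_iff simp: in_range_def)

lemma act_commutator:
  "in_range d x \<Longrightarrow> in_range d y \<Longrightarrow>
     act x (act y v) - act y (act x v) =
       (\<Sum>(c, g)\<leftarrow>brk_terms x y. sc c (act g v))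
       + sc ((r - 1) * (\<Sum>(c, g)\<leftarrow>brk_terms x y. c * cst g)) v"
  using Mr_module unfolding Mr_module_def by blast

lemma span_pbw_mono: "V.span (pbw_mono act one ` {S. \<forall>g\<in>set_mset S. inBminus d g}) = UNIV"
  using Mr_module unfolding Mr_module_def Let_def by blast

lemma act_one_eq_zero:
  assumes "i \<in> {1..d}" "j \<in> {1..d}" "0 \<le> a \<or> 0 \<le> b" "\<not> (i = j \<and> a + b = 0)"
  shows "act (i, j, a, b) one = 0"
proof -
  have kill: "inBplus d x \<Longrightarrow> act x one = 0" for x
    using Mr_module unfolding Mr_module_def by blast
  show ?thesis
  proof (cases "i < j \<or> (i = j \<and> a \<le> b)")
    case True
    then show ?thesis using assms by (intro kill) (auto simp: inBplus_def inB_def)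
  next
    case False
    then have "act (i, j, a, b) = act (j, i, b, a)" using assms by (intro act_swap) auto
    moreover have "act (j, i, b, a) one = 0"
      using False assms by (intro kill) (auto simp: inBplus_def inB_def)
    ultimately show ?thesis by simp
  qed
qed

definition annihilated_above :: "int \<Rightarrow> 'v \<Rightarrow> bool" where
  "annihilated_above N w \<longleftrightarrow> (\<forall>i j a b. i \<in> {1..d} \<longrightarrow> j \<in> {1..d} \<longrightarrow> (N < a \<or> N < b)
     \<longrightarrow> \<not> (i = j \<and> a + b = 0) \<longrightarrow> act (i, j, a, b) w = 0)"

lemma annihilated_aboveD:
  "annihilated_above N w \<Longrightarrow> i \<in> {1..d} \<Longrightarrow> j \<in> {1..d} \<Longrightarrow> N < a \<or> N < b
     \<Longrightarrow> \<not> (i = j \<and> a + b = 0) \<Longrightarrow> act (i, j, a, b) w = 0"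
  unfolding annihilated_above_def by blast

lemma annihilated_above_mono: "annihilated_above N w \<Longrightarrow> N \<le> N' \<Longrightarrow> annihilated_above N' w"
  unfolding annihilated_above_def by (meson order_le_less_trans)

lemma annihilated_above_one: "0 \<le> N \<Longrightarrow> annihilated_above N one"
  unfolding annihilated_above_def by (auto intro: act_one_eq_zero)

lemma annihilated_above_act:
  assumes u: "annihilated_above N u" and kl: "k \<in> {1..d}" "l \<in> {1..d}"
    and pq: "p < 0" "q < 0" "- p \<le> N" "- q \<le> N"
  shows "annihilated_above N (act (k, l, p, q) u)"
  unfolding annihilated_above_def
proof (intro allI impI)
  fix i j a b
  assume ij: "i \<in> {1..d}" "j \<in> {1..d}" and big: "N < a \<or> N < b" and ex: "\<not> (i = j \<and> a + b = 0)"
  note zero = annihilated_aboveD[OF u]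
  have "act (i, j, a, b) (act (k, l, p, q) u) = act (k, l, p, q) (act (i, j, a, b) u) +
      ((\<Sum>(c, g)\<leftarrow>brk_terms (i, j, a, b) (k, l, p, q). sc c (act g u))
       + sc ((r - 1) * (\<Sum>(c, g)\<leftarrow>brk_terms (i, j, a, b) (k, l, p, q). c * cst g)) u)"
    using act_commutator[of "(i, j, a, b)" "(k, l, p, q)" u] ij kl by (simp add: algebra_simps)
  also have "\<dots> = 0"
  proof -
    have "act (i, j, a, b) u = 0" using zero ij big ex by blast
    moreover from big
    have "(\<Sum>(c, g)\<leftarrow>brk_terms (i, j, a, b) (k, l, p, q). sc c (act g u)) = 0
        \<and> (\<Sum>(c, g)\<leftarrow>brk_terms (i, j, a, b) (k, l, p, q). c * cst g) = 0"
    proof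
      assume "N < a"
      then show ?thesis using zero[of i l a q] zero[of i k a p] ij kl pq
        by (auto simp: brk_terms_def cst_def)
    next
      assume "N < b"
      then show ?thesis using zero[of l j q b] zero[of k j p b] ij kl pq
        by (auto simp: brk_terms_def cst_def)
    qed
    ultimately show ?thesis using module_hom.zero[OF act_hom] kl by simp
  qed
  finally show "act (i, j, a, b) (act (k, l, p, q) u) = 0" .
qed

lemma annihilated_above_pbw_mono:
  assumes "\<forall>g\<in>set_mset S. inBminus d g"
  shows "\<exists>N. annihilated_above N (pbw_mono act one S)"
proof -
  define N where "N = (\<Sum>(k, l, p, q)\<in>set_mset S. \<bar>p\<bar> + \<bar>q\<bar>)"
  have bound: "\<bar>p\<bar> + \<bar>q\<bar> \<le> N" if "(k, l, p, q) \<in> set_mset S" for k l p q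
    using member_le_sum[OF that, of "\<lambda>(k, l, p, q). \<bar>p\<bar> + \<bar>q\<bar>"] unfolding N_def by auto
  have "annihilated_above N (foldr act gs one)" if "set gs \<subseteq> set_mset S" for gs
    using that
  proof (induction gs)
    case Nil
    have "0 \<le> N" unfolding N_def by (auto intro: sum_nonneg)
    then show ?case using annihilated_above_one by simp
  next
    case (Cons g gs)
    obtain k l p q where g: "g = (k, l, p, q)" by (cases g)
    have "g \<in> set_mset S" using Cons.prems by simp
    then show ?case
      using Cons bound[of k l p q] assms g
      by (auto simp: inBminus_def inB_def intro!: annihilated_above_act)
  qed
  then show ?thesis unfolding pbw_mono_def by (metis order_refl set_sorted_list_of_multiset)
qed

lemma ex_annihilated_above: "\<exists>N. annihilated_above N w"
proof -
  have "w \<in> V.span (pbw_mono act one ` {S. \<forall>g\<in>set_mset S. inBminus d g})"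
    using span_pbw_mono by simp
  then show ?thesis
  proof (induction rule: V.span_induct)
    case base
    show ?case
    proof (rule V.subspaceI)
      show "0 \<in> {w. \<exists>N. annihilated_above N w}"
        using module_hom.zero[OF act_hom] by (auto simp: annihilated_above_def)
    next
      fix x y assume "x \<in> {w. \<exists>N. annihilated_above N w}" "y \<in> {w. \<exists>N. annihilated_above N w}"
      then obtain N1 N2 where "annihilated_above N1 x" "annihilated_above N2 y" by blast
      then have "annihilated_above (max N1 N2) x" "annihilated_above (max N1 N2) y"
        by (auto intro: annihilated_above_mono)
      then have "annihilated_above (max N1 N2) (x + y)"
        using module_hom.add[OF act_hom] by (simp add: annihilated_above_def)
      then show "x + y \<in> {w. \<exists>N. annihilated_above N w}" by blast
    next
      fix c x assume "x \<in> {w. \<exists>N. annihilated_above N w}"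
      then obtain N where "annihilated_above N x" by blast
      then have "annihilated_above N (sc c x)"
        using module_hom.scale[OF act_hom] by (simp add: annihilated_above_def)
      then show "sc c x \<in> {w. \<exists>N. annihilated_above N w}" by blast
    qed
  next
    case (step x)
    then show ?case using annihilated_above_pbw_mono by auto
  qed
qed

lemma finite_support_act:
  assumes "i \<in> {1..d}" "j \<in> {1..d}" "\<not> (i = j \<and> P = 0)"
  shows "finite {k. act (i, j, P - k, k) w \<noteq> 0}"
proof -
  obtain N where N: "annihilated_above N w" using ex_annihilated_above by blast
  have "act (i, j, P - k, k) w = 0" if "k \<notin> {P - N..N}" for k
    using that assms by (intro annihilated_aboveD[OF N]) auto
  then have "{k. act (i, j, P - k, k) w \<noteq> 0} \<subseteq> {P - N..N}" by blast
  then show ?thesis by (rule finite_subset) simp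
qed

abbreviation L_minus_one :: "nat \<Rightarrow> 'v \<Rightarrow> 'v" where
  "L_minus_one i \<equiv> Lop sc act i i (-1)"

lemma L_minus_one_one:
  assumes "i \<in> {1..d}"
  shows "L_minus_one i one = 0"
proof -
  have "act (i, i, -1 - h, h) one = 0" for h
    using assms by (intro act_one_eq_zero) auto
  then show ?thesis by (simp add: Lop_def)
qed

lemma L_minus_one_commutator:
  assumes ij: "i \<in> {1..d}" "j \<in> {1..d}" "i \<noteq> j"
  shows "L_minus_one i (act (i, j, p, q) w) - act (i, j, p, q) (L_minus_one i w)
     = sc (- of_int p) (act (i, j, p - 1, q) w)"
proof -
  let ?x = "\<lambda>h. act (i, i, -1 - h, h)" and ?y = "act (i, j, p, q)"
  define A where "A = sc (- of_int p) (act (i, j, p - 1, q) w)"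
  have fin: "finite {h. ?x h v \<noteq> 0}" for v
    using finite_support_act[of i i "-1" v] ij by simp
  have y: "module_hom sc sc ?y" using ij by (simp add: act_hom)
  have fin_y: "finite {h. ?y (?x h w) \<noteq> 0}"
    by (rule finite_subset[OF _ fin[of w]]) (auto simp: module_hom.zero[OF y])
  have bracket: "?x h (?y w) - ?y (?x h w) = (if h = - p then A else 0) + (if h = p - 1 then A else 0)"
    for h
  proof -
    have "?x h (?y w) - ?y (?x h w)
       = sc (if h + p = 0 then of_int h else 0) (act (i, j, -1 - h, q) w)
         + sc (if -1 - h + p = 0 then of_int (-1 - h) else 0) (act (j, i, q, h) w)"
      using act_commutator[of "(i, i, -1 - h, h)" "(i, j, p, q)" w] ij
      by (simp add: brk_terms_def cst_def)
    moreover have "act (j, i, q, p - 1) = act (i, j, p - 1, q)"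
      using act_swap[of j i q "p - 1"] ij by auto
    moreover have "h = - p \<Longrightarrow> h \<noteq> p - 1" by presburger
    ultimately show ?thesis by (auto simp: A_def)
  qed
  have "L_minus_one i (?y w) - ?y (L_minus_one i w)
      = sc (1/2) (Sum_any (\<lambda>h. ?x h (?y w)) - Sum_any (\<lambda>h. ?y (?x h w)))"
    by (simp add: Lop_def module_hom.scale[OF y] Sum_any_module_hom[OF y fin] V.scale_right_diff_distrib)
  also have "\<dots> = sc (1/2) (Sum_any (\<lambda>h. ?x h (?y w) - ?y (?x h w)))"
    using fin fin_y by (simp add: Sum_any_diff)
  also have "\<dots> = sc (1/2) (A + A)"
  proof -
    have "- p \<noteq> p - 1" by presburger
    then show ?thesis unfolding bracket by (subst Sum_any.expand_superset[of "{- p, p - 1}"]) auto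
  qed
  also have "\<dots> = A"
  proof -
    have "A + A = sc 2 A" using V.scale_left_distrib[of 1 1 A] by simp
    then show ?thesis by simp
  qed
  finally show ?thesis unfolding A_def .
qed

text \<open>\<open>vo_mode i j m n l\<close> is the coefficient of z^(-l-1) in the claimed formula for
  Y(v^ij(m,n) 1, z).\<close>

definition vo_mode :: "nat \<Rightarrow> nat \<Rightarrow> int \<Rightarrow> int \<Rightarrow> int \<Rightarrow> 'v \<Rightarrow> 'v" where
  "vo_mode i j m n l w = sc ((-1) ^ nat (- m - n))
     (Sum_any (\<lambda>k. sc (vo_coeff m n l k) (act (i, j, l + m + n + 1 - k, k) w)))"

lemma vo_mode_swap:
  assumes "i \<in> {1..d}" "j \<in> {1..d}" "i \<noteq> j"
  shows "vo_mode j i n m = vo_mode i j m n"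
proof (intro ext)
  fix l w
  let ?P = "l + m + n + 1"
  have "Sum_any (\<lambda>k. sc (vo_coeff n m l k) (act (j, i, l + n + m + 1 - k, k) w))
      = Sum_any (\<lambda>k. sc (vo_coeff m n l k) (act (i, j, ?P - k, k) w))"
  proof (rule Sum_any.reindex_cong[of "\<lambda>k. ?P - k"])
    show "bij (\<lambda>k. ?P - k)" by (rule bij_diff)
    have "act (j, i, k, ?P - k) = act (i, j, ?P - k, k)" for k
      using act_swap[of j i k "?P - k"] assms by auto
    moreover have "l + n + m + 1 - (?P - k) = k" for k by simp
    ultimately show "(\<lambda>k. sc (vo_coeff n m l k) (act (j, i, l + n + m + 1 - k, k) w)) \<circ> (\<lambda>k. ?P - k)
        = (\<lambda>k. sc (vo_coeff m n l k) (act (i, j, ?P - k, k) w))"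
      by (simp add: fun_eq_iff vo_coeff_swap)
  qed
  moreover have "nat (- n - m) = nat (- m - n)" by (rule arg_cong[where f = nat]) simp
  ultimately show "vo_mode j i n m l w = vo_mode i j m n l w"
    unfolding vo_mode_def by (simp only: add_ac)
qed

end

lemma is_VOA_module_hom: "is_VOA sc Y one omega c \<Longrightarrow> module_hom sc sc (Y a n)"
  unfolding is_VOA_def linear_iff_module_hom by (elim conjE) blast

lemma is_VOA_module_hom_left: "is_VOA sc Y one omega c \<Longrightarrow> module_hom sc sc (\<lambda>a. Y a n b)"
  unfolding is_VOA_def linear_iff_module_hom by (elim conjE) blast

lemma is_VOA_zero_mode_commutator:
  assumes "is_VOA sc Y one omega c"
  shows "Y (Y a 0 b) q e = Y a 0 (Y b q e) - Y b q (Y a 0 e)"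
proof -
  interpret vector_space sc using assms unfolding is_VOA_def by blast
  have Borcherds:
    "Sum_any (\<lambda>i::nat. sc ((of_int 0 :: complex) gchoose i) (Y (Y a (0 + int i) b) (0 + q - int i) e))
      = Sum_any (\<lambda>i::nat. sc ((-1) ^ i * ((of_int 0 :: complex) gchoose i))
          (Y a (0 + 0 - int i) (Y b (q + int i) e)
           - sc ((-1) powi 0) (Y b (q + 0 - int i) (Y a (0 + int i) e))))"
    using assms unfolding is_VOA_def by blast
  have lhs: "(\<lambda>i::nat. sc ((of_int 0 :: complex) gchoose i) (Y (Y a (0 + int i) b) (0 + q - int i) e))
      = (\<lambda>i. if i = 0 then Y (Y a 0 b) q e else 0)"
    by (auto simp: gbinomial_0_left)
  have rhs: "(\<lambda>i::nat. sc ((-1) ^ i * ((of_int 0 :: complex) gchoose i))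
          (Y a (0 + 0 - int i) (Y b (q + int i) e)
           - sc ((-1) powi 0) (Y b (q + 0 - int i) (Y a (0 + int i) e))))
      = (\<lambda>i. if i = 0 then Y a 0 (Y b q e) - Y b q (Y a 0 e) else 0)"
    by (auto simp: gbinomial_0_left)
  show ?thesis using Borcherds unfolding lhs rhs by simp
qed

locale Mr_VOA = Mr d r sc act one
  for d r and sc :: "complex \<Rightarrow> 'v::ab_group_add \<Rightarrow> 'v" and act one +
  fixes Y :: "'v \<Rightarrow> int \<Rightarrow> 'v \<Rightarrow> 'v" and omega :: 'v and c :: complex
  assumes VOA: "is_VOA sc Y one omega c"
    and Y_Lop: "\<And>a b p. a \<in> {1..d} \<Longrightarrow> b \<in> {1..d} \<Longrightarrow>
      Y (Lop sc act a b (-2) one) (p + 1) = Lop sc act a b p"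
begin

lemma L_minus_one_eq_Y: "i \<in> {1..d} \<Longrightarrow> L_minus_one i = Y (Lop sc act i i (-2) one) 0"
  using Y_Lop[of i i "-1"] by simp

lemma L_minus_one_module_hom: "i \<in> {1..d} \<Longrightarrow> module_hom sc sc (L_minus_one i)"
  using is_VOA_module_hom[OF VOA] L_minus_one_eq_Y by simp

lemma Y_L_minus_one:
  "i \<in> {1..d} \<Longrightarrow> Y (L_minus_one i x) l w = L_minus_one i (Y x l w) - Y x l (L_minus_one i w)"
  using is_VOA_zero_mode_commutator[OF VOA] L_minus_one_eq_Y by simp

lemma vo_mode_pred_first:
  assumes ij: "i \<in> {1..d}" "j \<in> {1..d}" "i \<noteq> j" and mn: "m < 0" "n < 0"
  shows "L_minus_one i (vo_mode i j m n l w) - vo_mode i j m n l (L_minus_one i w)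
     = sc (- of_int m) (vo_mode i j (m - 1) n l w)"
proof -
  let ?L = "L_minus_one i" and ?P = "l + m + n + 1"
  let ?t = "\<lambda>k v. sc (vo_coeff m n l k) (act (i, j, ?P - k, k) v)"
  let ?t' = "\<lambda>k. sc (vo_coeff (m - 1) n l k) (act (i, j, ?P - 1 - k, k) w)"
  have L: "module_hom sc sc ?L" using ij(1) by (rule L_minus_one_module_hom)
  have scale: "module_hom sc sc (sc a)" for a
    using V.module_hom_scale_self linear_iff_module_hom by blast
  have fin: "finite {k. ?t k v \<noteq> 0}" for v
    by (rule finite_subset[OF _ finite_support_act[of i j ?P v]]) (use ij in auto)
  have fin_L: "finite {k. ?L (?t k w) \<noteq> 0}"
    by (rule finite_subset[OF _ fin[of w]]) (auto simp: module_hom.zero[OF L])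
  have fin': "finite {k. ?t' k \<noteq> 0}"
    by (rule finite_subset[OF _ finite_support_act[of i j "?P - 1" w]]) (use ij in auto)
  have "?L (?t k w) - ?t k (?L w)
      = sc (vo_coeff m n l k) (?L (act (i, j, ?P - k, k) w) - act (i, j, ?P - k, k) (?L w))" for k
    by (simp add: module_hom.scale[OF L] V.scale_right_diff_distrib)
  also have "\<dots> k = sc (- (of_int (?P - k) * vo_coeff m n l k)) (act (i, j, ?P - 1 - k, k) w)" for k
    by (simp add: L_minus_one_commutator[OF ij] algebra_simps)
  also have "\<dots> k = sc (of_int m) (?t' k)" for k
    by (simp add: vo_coeff_pred_first[OF mn(1)])
  finally have summand: "?L (?t k w) - ?t k (?L w) = sc (of_int m) (?t' k)" for k .
  have "nat (- (m - 1) - n) = Suc (nat (- m - n))" using mn by linarith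
  then have sign: "(-1::complex) ^ nat (- (m - 1) - n) = - ((-1) ^ nat (- m - n))" by simp
  have "?L (vo_mode i j m n l w) - vo_mode i j m n l (?L w)
      = sc ((-1) ^ nat (- m - n)) (?L (Sum_any (\<lambda>k. ?t k w)) - Sum_any (\<lambda>k. ?t k (?L w)))"
    unfolding vo_mode_def by (simp add: module_hom.scale[OF L] V.scale_right_diff_distrib)
  also have "\<dots> = sc ((-1) ^ nat (- m - n)) (Sum_any (\<lambda>k. ?L (?t k w) - ?t k (?L w)))"
    by (simp only: Sum_any_module_hom[OF L fin] Sum_any_diff[OF fin_L fin])
  also have "\<dots> = sc ((-1) ^ nat (- m - n)) (sc (of_int m) (Sum_any ?t'))"
    unfolding summand Sum_any_module_hom[OF scale fin'] ..
  also have "\<dots> = sc (- of_int m) (vo_mode i j (m - 1) n l w)"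
    unfolding vo_mode_def sign by (simp add: algebra_simps)
  finally show ?thesis .
qed

lemma Y_act_one_base:
  assumes ij: "i \<in> {1..d}" "j \<in> {1..d}" "i \<noteq> j"
  shows "Y (act (i, j, -1, -1) one) = vo_mode i j (-1) (-1)"
proof (intro ext)
  fix l w
  let ?x = "act (i, j, -1, -1) one"
  have "act (i, j, -2 - h, h) one = (if h = -1 then ?x else 0)" for h
    using ij by (auto intro: act_one_eq_zero)
  then have "Lop sc act i j (-2) one = sc (1/2) ?x" using ij by (simp add: Lop_def)
  then have x: "?x = sc 2 (Lop sc act i j (-2) one)" by simp
  have "Y ?x l w = sc 2 (Y (Lop sc act i j (-2) one) ((l - 1) + 1) w)"
    unfolding x by (simp add: module_hom.scale[OF is_VOA_module_hom_left[OF VOA]])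
  also have "\<dots> = sc 2 (Lop sc act i j (l - 1) w)"
    by (simp only: Y_Lop[OF ij(1,2)])
  also have "\<dots> = vo_mode i j (-1) (-1) l w"
    using ij by (simp add: Lop_def vo_mode_def)
  finally show "Y ?x l w = vo_mode i j (-1) (-1) l w" .
qed

lemma Y_act_one_pred_first:
  assumes ij: "i \<in> {1..d}" "j \<in> {1..d}" "i \<noteq> j" and mn: "m < 0" "n < 0"
    and Y_x: "Y (act (i, j, m, n) one) = vo_mode i j m n"
  shows "Y (act (i, j, m - 1, n) one) = vo_mode i j (m - 1) n"
proof (intro ext)
  fix l w
  let ?x = "act (i, j, m, n) one"
  have m: "of_int m \<noteq> (0::complex)" using mn by simp
  have "L_minus_one i ?x = sc (- of_int m) (act (i, j, m - 1, n) one)"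
    using L_minus_one_commutator[OF ij, of m n one] L_minus_one_one module_hom.zero[OF act_hom] ij
    by simp
  then have lower: "act (i, j, m - 1, n) one = sc (- 1 / of_int m) (L_minus_one i ?x)"
    using m by simp
  have "Y (act (i, j, m - 1, n) one) l w
      = sc (- 1 / of_int m) (L_minus_one i (Y ?x l w) - Y ?x l (L_minus_one i w))"
    unfolding lower module_hom.scale[OF is_VOA_module_hom_left[OF VOA]] Y_L_minus_one[OF ij(1)] ..
  also have "\<dots> = vo_mode i j (m - 1) n l w"
    unfolding Y_x vo_mode_pred_first[OF ij mn] using m by simp
  finally show "Y (act (i, j, m - 1, n) one) l w = vo_mode i j (m - 1) n l w" .
qed

lemma Y_act_one:
  assumes ij: "i \<in> {1..d}" "j \<in> {1..d}" "i \<noteq> j" and mn: "m < 0" "n < 0"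
  shows "Y (act (i, j, m, n) one) = vo_mode i j m n"
proof -
  have lower_first: "Y (act (a, b, m', n') one) = vo_mode a b m' n'"
    if ab: "a \<in> {1..d}" "b \<in> {1..d}" "a \<noteq> b" and "m' \<le> -1" "n' < 0"
      and Y_minus_one: "Y (act (a, b, -1, n') one) = vo_mode a b (-1) n'" for a b m' n'
    using \<open>m' \<le> -1\<close>
  proof (induction m' rule: int_le_induct)
    case base
    show ?case by (rule Y_minus_one)
  next
    case (step m')
    then have "m' < 0" by simp
    then show ?case by (rule Y_act_one_pred_first[OF ab _ \<open>n' < 0\<close> step.IH])
  qed
  have "Y (act (j, i, n, -1) one) = vo_mode j i n (-1)"
    by (rule lower_first[OF _ _ _ _ _ Y_act_one_base]) (use ij mn in auto)
  moreover have "act (j, i, n, -1) = act (i, j, -1, n)"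
    using act_swap[of j i n "-1"] ij by simp
  ultimately have "Y (act (i, j, -1, n) one) = vo_mode i j (-1) n"
    by (simp only: vo_mode_swap[OF ij])
  then show ?thesis
    by (rule lower_first[rotated 5]) (use ij mn in auto)
qed

end

theorem lemma3p5:
  fixes d :: nat and r :: complex
    and sc :: "complex \<Rightarrow> 'v::ab_group_add \<Rightarrow> 'v"
    and act :: "gen \<Rightarrow> 'v \<Rightarrow> 'v" and one :: 'v
    and Y :: "'v \<Rightarrow> int \<Rightarrow> 'v \<Rightarrow> 'v"
    and i j :: nat and m n :: int
  assumes "d \<ge> 2"
    and "Mr_module d r sc act one"
    and "is_VOA sc Y one (\<Sum>k = 1..d. Lop sc act k k (-2) one) (of_nat d * r)"
    and "\<forall>a b p. 1 \<le> a \<and> a \<le> d \<and> 1 \<le> b \<and> b \<le> d \<longrightarrow>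
           Y (Lop sc act a b (-2) one) (p + 1) = Lop sc act a b p"
    and "1 \<le> i" "i \<le> d" "1 \<le> j" "j \<le> d" "i \<noteq> j" "m < 0" "n < 0"
  shows "\<forall>l w. Y (act (i,j,m,n) one) l w =
           sc ((-1) ^ nat (- m - n))
             (Sum_any (\<lambda>k. sc (((of_int (l + n - k) :: complex) gchoose nat (- m - 1))
                               * ((of_int (k - n - 1) :: complex) gchoose nat (- n - 1)))
                              (act (i, j, l + m + n + 1 - k, k) w)))"
proof -
  interpret Mr_VOA d r sc act one Y "\<Sum>k = 1..d. Lop sc act k k (-2) one" "of_nat d * r"
    using assms(2-4) by unfold_locales auto
  have "Y (act (i, j, m, n) one) = vo_mode i j m n"
    using assms(5-11) by (intro Y_act_one) auto
  then show ?thesis by (simp add: vo_mode_def vo_coeff_def)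
qed

end
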